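(* Let $\mathsf C$ be a rainbow cycle and let $\mathsf X$ be either a rainbow cycle or a bad piece. Assume that $\chi(\mathsf X)\cap\chi(\mathsf C\setminus\mathsf X)=\emptyset$, that $E(\mathsf C)\setminus E(\mathsf X)\neq\emptyset$, and that $|V(\mathsf C)\cap V(\mathsf X)|\ge 2$. Then there is a rainbow even cycle all of whose (colored) edges belong to $\mathsf C\cup\mathsf X$.
   Context: A (colored) graph is a finite set $\mathsf G$ of pairs $(e,\alpha)$, where the $e$'s are pairwise distinct 2-element subsets of a vertex set and $\alpha$ is a color (colors may repeat). $V(\mathsf G)$, $E(\mathsf G)$, $\chi(\mathsf G)$ denote its vertex set, its set of underlying uncolored edges, and its set of colors; $\mathsf C\setminus\mathsf X$ is set difference of colored edges. $\mathsf G$ is rainbow if $|\chi(\mathsf G)|=|\mathsf G|$ and almost rainbow if $|\chi(\mathsf G)|=|\mathsf G|-1$. Paths and cycles are colored graphs whose underlying uncolored edges form a path (with two distinct terminals) or a cycle; an even cycle has an even number of edges. A theta graph is a union $\mathsf P_1\cup\mathsf P_2\cup\mathsf P_3$ of three paths with the same terminals $s\neq t$ such that any two of them share no vertex other than $s,t$ and no underlying uncolored edge. A bad piece is an almost rainbow theta graph with at least $6$ vertices that is the union of three rainbow paths $\mathsf P_1,\mathsf P_2,\mathsf P_3$ as in the definition of a theta graph. *)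

theory Defs
  imports Main
begin

type_synonym ('v,'c) cgraph = "('v set \<times> 'c) set"

definition colored_graph :: "('v,'c) cgraph \<Rightarrow> bool" where
  "colored_graph G \<longleftrightarrow> finite G \<and> (\<forall>p\<in>G. card (fst p) = 2)
     \<and> (\<forall>p\<in>G. \<forall>q\<in>G. fst p = fst q \<longrightarrow> p = q)"

definition Vs :: "('v,'c) cgraph \<Rightarrow> 'v set" where
  "Vs G = \<Union> (fst ` G)"

definition Es :: "('v,'c) cgraph \<Rightarrow> 'v set set" where
  "Es G = fst ` G"

definition colors :: "('v,'c) cgraph \<Rightarrow> 'c set" where
  "colors G = snd ` G"

definition rainbow :: "('v,'c) cgraph \<Rightarrow> bool" where
  "rainbow G \<longleftrightarrow> card (colors G) = card G"

definition almost_rainbow :: "('v,'c) cgraph \<Rightarrow> bool" where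
  "almost_rainbow G \<longleftrightarrow> card (colors G) + 1 = card G"

definition is_path :: "('v,'c) cgraph \<Rightarrow> 'v \<Rightarrow> 'v \<Rightarrow> bool" where
  "is_path G s t \<longleftrightarrow> colored_graph G \<and> s \<noteq> t \<and>
     (\<exists>vs. distinct vs \<and> length vs \<ge> 2 \<and> hd vs = s \<and> last vs = t \<and>
        Es G = {{vs ! i, vs ! (i+1)} | i. i + 1 < length vs})"

definition is_cycle :: "('v,'c) cgraph \<Rightarrow> bool" where
  "is_cycle G \<longleftrightarrow> colored_graph G \<and>
     (\<exists>vs. distinct vs \<and> length vs \<ge> 3 \<and>
        Es G = {{vs ! i, vs ! ((i+1) mod length vs)} | i. i < length vs})"

definition even_cycle :: "('v,'c) cgraph \<Rightarrow> bool" where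
  "even_cycle G \<longleftrightarrow> is_cycle G \<and> even (card G)"

definition theta_of :: "('v,'c) cgraph \<Rightarrow> ('v,'c) cgraph \<Rightarrow> ('v,'c) cgraph \<Rightarrow> ('v,'c) cgraph \<Rightarrow> bool" where
  "theta_of G P1 P2 P3 \<longleftrightarrow> G = P1 \<union> P2 \<union> P3 \<and>
     (\<exists>s t. s \<noteq> t \<and> is_path P1 s t \<and> is_path P2 s t \<and> is_path P3 s t \<and>
        Vs P1 \<inter> Vs P2 \<subseteq> {s,t} \<and> Vs P1 \<inter> Vs P3 \<subseteq> {s,t} \<and> Vs P2 \<inter> Vs P3 \<subseteq> {s,t} \<and>
        Es P1 \<inter> Es P2 = {} \<and> Es P1 \<inter> Es P3 = {} \<and> Es P2 \<inter> Es P3 = {})"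

definition theta_graph :: "('v,'c) cgraph \<Rightarrow> bool" where
  "theta_graph G \<longleftrightarrow> (\<exists>P1 P2 P3. theta_of G P1 P2 P3)"

definition bad_piece :: "('v,'c) cgraph \<Rightarrow> bool" where
  "bad_piece G \<longleftrightarrow> almost_rainbow G \<and> card (Vs G) \<ge> 6 \<and>
     (\<exists>P1 P2 P3. theta_of G P1 P2 P3 \<and> rainbow P1 \<and> rainbow P2 \<and> rainbow P3)"

end

theory Submission
  imports Defs
begin

text \<open>
  Since \<open>C\<close> has an edge outside \<open>X\<close> and meets \<open>X\<close> in two vertices, it contains an ear
  \<open>P\<close> of \<open>X\<close>: a path joining two distinct vertices of \<open>X\<close> whose inner vertices and edges
  lie outside \<open>X\<close>. By the colour hypothesis, adding the edges of \<open>P\<close> creates no new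
  repetition of colours.

  If \<open>X\<close> is a rainbow cycle, then \<open>X \<union> P\<close> is a theta graph; either \<open>X\<close> is even, or the
  two cycles through \<open>P\<close> have odd total length, so one of them is even.

  If \<open>X\<close> is a bad piece, its two edges of equal colour lie on different paths, say \<open>P\<^sub>1\<close>
  and \<open>P\<^sub>2\<close>, and every cycle missing one of them is rainbow. The cycle
  \<open>P\<^sub>1 \<union> P\<^sub>3\<close> misses the second one; if it is even, or if both ends of the ear lie on it,
  the previous case applies to it, and symmetrically for \<open>P\<^sub>2 \<union> P\<^sub>3\<close>. Otherwise the ear
  joins inner vertices of \<open>P\<^sub>1\<close> and \<open>P\<^sub>2\<close>, \<open>X \<union> P\<close> is a subdivision of \<open>K\<^sub>4\<close>, and a
  parity count shows that it has an even cycle missing one of the two repeated edges.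
\<close>

section \<open>Paths and cycles as vertex lists\<close>

fun path_edges :: "'v list \<Rightarrow> 'v set set" where
  "path_edges (x # y # zs) = insert {x, y} (path_edges (y # zs))"
| "path_edges _ = {}"

definition cycle_edges :: "'v list \<Rightarrow> 'v set set" where
  "cycle_edges zs = path_edges (zs @ [hd zs])"

lemma path_edges_conv_nth:
  "path_edges xs = {{xs ! i, xs ! (i + 1)} | i. i + 1 < length xs}"
proof (induction xs rule: path_edges.induct)
  case (1 x y zs)
  have "{{(x # y # zs) ! i, (x # y # zs) ! (i + 1)} | i. i + 1 < length (x # y # zs)}
      = insert {x, y} {{(y # zs) ! i, (y # zs) ! (i + 1)} | i. i + 1 < length (y # zs)}"
    (is "?L = ?R")
  proof
    show "?L \<subseteq> ?R" by (force simp: nth_Cons split: nat.splits)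
    show "?R \<subseteq> ?L"
    proof
      fix e assume "e \<in> ?R"
      then show "e \<in> ?L"
      proof
        assume "e = {x, y}" then show ?thesis by (intro CollectI exI[of _ 0]) auto
      next
        assume "e \<in> {{(y # zs) ! i, (y # zs) ! (i + 1)} | i. i + 1 < length (y # zs)}"
        then obtain i where "e = {(y # zs) ! i, (y # zs) ! (i + 1)}" "i + 1 < length (y # zs)"
          by blast
        then show ?thesis by (intro CollectI exI[of _ "Suc i"]) auto
      qed
    qed
  qed
  with 1 show ?case by simp
qed auto

lemma finite_path_edges [simp]: "finite (path_edges xs)"
  by (induction xs rule: path_edges.induct) auto

lemma path_edges_append:
  "path_edges (xs @ ys) =
     path_edges xs \<union> path_edges ys \<union> (if xs = [] \<or> ys = [] then {} else {{last xs, hd ys}})"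
proof (induction xs)
  case (Cons x xs) then show ?case by (cases xs; cases ys) auto
qed simp

lemma path_edges_append_tl:
  "xs \<noteq> [] \<Longrightarrow> ys \<noteq> [] \<Longrightarrow> last xs = hd ys \<Longrightarrow>
     path_edges (xs @ tl ys) = path_edges xs \<union> path_edges ys"
  by (cases ys; cases "tl ys") (auto simp: path_edges_append)

lemma path_edges_rev [simp]: "path_edges (rev xs) = path_edges xs"
proof (induction xs rule: path_edges.induct)
  case (1 x y zs)
  have "path_edges (rev (y # zs) @ [x]) = path_edges (rev (y # zs)) \<union> {{y, x}}"
    by (simp add: path_edges_append)
  with 1 show ?case by (simp add: insert_commute)
qed auto

lemma path_edge_subset_set: "e \<in> path_edges xs \<Longrightarrow> e \<subseteq> set xs"
  by (induction xs rule: path_edges.induct) auto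

lemma card_path_edge: "distinct xs \<Longrightarrow> e \<in> path_edges xs \<Longrightarrow> card e = 2"
  by (induction xs rule: path_edges.induct) auto

lemma card_path_edges: "distinct xs \<Longrightarrow> card (path_edges xs) = length xs - 1"
proof (induction xs rule: path_edges.induct)
  case (1 x y zs)
  then have "{x, y} \<notin> path_edges (y # zs)" using path_edge_subset_set by fastforce
  with 1 show ?case by simp
qed auto

lemma Union_path_edges: "2 \<le> length xs \<Longrightarrow> \<Union> (path_edges xs) = set xs"
proof (induction xs rule: path_edges.induct)
  case (1 x y zs) then show ?case by (cases zs) auto
qed auto

lemma path_edges_split: "e \<in> path_edges xs \<Longrightarrow> \<exists>p x y q. xs = p @ x # y # q \<and> e = {x, y}"
proof (induction xs rule: path_edges.induct)
  case (1 x y zs)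
  show ?case
  proof (cases "e = {x, y}")
    case False
    with 1 obtain p a b q where "y # zs = p @ a # b # q" "e = {a, b}" by auto
    then show ?thesis by (intro exI[of _ "x # p"]) auto
  qed (intro exI[of _ "[]"], auto)
qed auto

lemma hd_last_notin_path_edges:
  assumes "distinct xs" "3 \<le> length xs"
  shows "{hd xs, last xs} \<notin> path_edges xs"
proof -
  obtain x y z zs where xs: "xs = x # y # z # zs"
    using assms(2) by (cases xs rule: path_edges.cases; cases "tl (tl xs)") auto
  then have "last xs \<in> set (z # zs)" by simp
  with xs assms(1) have "last xs \<noteq> x" "last xs \<noteq> y" by auto
  then show ?thesis using xs assms(1) path_edge_subset_set[of "{x, last xs}" "y # z # zs"]
    by (auto simp: doubleton_eq_iff)
qed

lemma path_edges_disjoint_if_meet_singleton: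
  assumes "distinct xs" "set xs \<inter> set ys \<subseteq> {w}"
  shows "path_edges xs \<inter> path_edges ys = {}"
proof (rule ccontr)
  assume "path_edges xs \<inter> path_edges ys \<noteq> {}"
  then obtain e where "e \<in> path_edges xs" "e \<in> path_edges ys" by blast
  then have "e \<subseteq> {w}" "card e = 2"
    using assms path_edge_subset_set card_path_edge by blast+
  then show False using card_mono[of "{w}" e] by simp
qed

lemma cycle_edges_eq: "zs \<noteq> [] \<Longrightarrow> cycle_edges zs = insert {last zs, hd zs} (path_edges zs)"
  by (auto simp: cycle_edges_def path_edges_append)

lemma cycle_edges_Nil [simp]: "cycle_edges [] = {}"
  by (simp add: cycle_edges_def)

lemma cycle_edges_conv_nth:
  assumes "zs \<noteq> []"
  shows "cycle_edges zs = {{zs ! i, zs ! ((i + 1) mod length zs)} | i. i < length zs}"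
  unfolding cycle_edges_def path_edges_conv_nth
proof (intro Collect_cong ex_cong1)
  fix e i
  show "(e = {(zs @ [hd zs]) ! i, (zs @ [hd zs]) ! (i + 1)} \<and> i + 1 < length (zs @ [hd zs]))
      = (e = {zs ! i, zs ! ((i + 1) mod length zs)} \<and> i < length zs)"
  proof (cases "i + 1 < length zs")
    case False
    then have "i + 1 = length zs \<or> \<not> i < length zs" by linarith
    then show ?thesis using assms by (auto simp: nth_append hd_conv_nth)
  qed (auto simp: nth_append)
qed

lemma card_cycle_edges:
  assumes "distinct zs" "3 \<le> length zs"
  shows "card (cycle_edges zs) = length zs"
proof -
  have "zs \<noteq> []" using assms(2) by auto
  then show ?thesis
    using assms hd_last_notin_path_edges[OF assms] card_path_edges[OF assms(1)]
    by (simp add: cycle_edges_eq insert_commute)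
qed

lemma Union_cycle_edges: "2 \<le> length zs \<Longrightarrow> \<Union> (cycle_edges zs) = set zs"
  by (cases zs) (auto simp: cycle_edges_eq Union_path_edges)

lemma cycle_edges_append_commute: "cycle_edges (xs @ ys) = cycle_edges (ys @ xs)"
  by (cases "xs = [] \<or> ys = []") (auto simp: cycle_edges_eq path_edges_append)

lemma path_edges_subset_cycle_edges: "path_edges xs \<subseteq> cycle_edges xs"
  by (cases xs) (auto simp: cycle_edges_eq)

definition list_path :: "'v list \<Rightarrow> 'v \<Rightarrow> 'v \<Rightarrow> bool" where
  "list_path xs s t \<longleftrightarrow> distinct xs \<and> 2 \<le> length xs \<and> hd xs = s \<and> last xs = t"

lemma list_path_rev: "list_path xs s t \<Longrightarrow> list_path (rev xs) t s"
  by (cases xs) (auto simp: list_path_def hd_rev last_rev)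

lemma list_path_ends:
  assumes "list_path xs s t"
  shows "s \<in> set xs" "t \<in> set xs" "s \<noteq> t" "xs \<noteq> []"
proof -
  obtain x y zs where xs: "xs = x # y # zs"
    using assms by (cases xs rule: path_edges.cases) (auto simp: list_path_def)
  then have "last xs \<in> set (y # zs)" by simp
  then show "s \<in> set xs" "t \<in> set xs" "s \<noteq> t" "xs \<noteq> []"
    using assms xs by (auto simp: list_path_def)
qed

lemma list_path_length_two: "list_path xs s t \<Longrightarrow> length xs = 2 \<Longrightarrow> xs = [s, t]"
  by (cases xs rule: path_edges.cases) (auto simp: list_path_def)

lemma list_path_interior:
  assumes "list_path xs s t"
  obtains m where "xs = s # m @ [t]"
proof -
  obtain x y r where "xs = x # y # r"
    using assms by (cases xs rule: path_edges.cases) (auto simp: list_path_def)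
  moreover have "x = s" "last (y # r) = t" using assms calculation by (simp_all add: list_path_def)
  ultimately have "xs = s # butlast (y # r) @ [t]"
    using append_butlast_last_id[of "y # r"] by (metis list.distinct(1))
  then show ?thesis by (rule that)
qed

lemma list_path_append_tl:
  assumes "list_path xs s u" "list_path ys u t" "set xs \<inter> set ys \<subseteq> {u}"
  shows "list_path (xs @ tl ys) s t"
    and "path_edges (xs @ tl ys) = path_edges xs \<union> path_edges ys"
    and "set (xs @ tl ys) = set xs \<union> set ys"
    and "length (xs @ tl ys) + 1 = length xs + length ys"
proof -
  obtain y ys' where ys: "ys = y # ys'" "ys' \<noteq> []"
    using assms(2) by (cases ys rule: path_edges.cases) (auto simp: list_path_def)
  then show "list_path (xs @ tl ys) s t"
    using assms list_path_ends(4)[OF assms(1)] by (auto simp: list_path_def)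
  show "path_edges (xs @ tl ys) = path_edges xs \<union> path_edges ys"
    using assms ys by (intro path_edges_append_tl) (auto simp: list_path_def)
  show "set (xs @ tl ys) = set xs \<union> set ys"
    using assms ys list_path_ends(2)[OF assms(1)] by (auto simp: list_path_def)
  show "length (xs @ tl ys) + 1 = length xs + length ys" using ys by simp
qed

lemma list_path_split:
  assumes "list_path xs s t" "u \<in> set xs" "u \<noteq> s" "u \<noteq> t"
  obtains as bs where "list_path as s u" "list_path bs u t"
    "set as \<union> set bs = set xs" "set as \<inter> set bs \<subseteq> {u}"
    "path_edges as \<union> path_edges bs = path_edges xs" "path_edges as \<inter> path_edges bs = {}"
    "length as + length bs = length xs + 1"
proof -
  obtain p q where xs: "xs = p @ u # q" using split_list[OF assms(2)] by blast
  then have "p \<noteq> []" "q \<noteq> []" using assms(1,3,4) by (auto simp: list_path_def)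
  define as where "as = p @ [u]"
  define bs where "bs = u # q"
  have paths: "list_path as s u" "list_path bs u t"
    using assms(1) xs \<open>p \<noteq> []\<close> \<open>q \<noteq> []\<close> by (auto simp: list_path_def as_def bs_def Suc_le_eq)
  have meet: "set as \<inter> set bs \<subseteq> {u}" using assms(1) xs by (auto simp: list_path_def as_def bs_def)
  have "xs = as @ tl bs" by (simp add: as_def bs_def xs)
  then show ?thesis
    using that[OF paths] list_path_append_tl[OF paths meet] meet
      path_edges_disjoint_if_meet_singleton[OF _ meet] paths(1)
    by (simp add: list_path_def)
qed

lemma cycle_of_list_paths:
  assumes "list_path xs s t" "list_path ys s t"
    "set xs \<inter> set ys \<subseteq> {s, t}" "path_edges xs \<inter> path_edges ys = {}"
  obtains zs where "distinct zs" "3 \<le> length zs"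
    "cycle_edges zs = path_edges xs \<union> path_edges ys" "set zs = set xs \<union> set ys"
    "length zs + 2 = length xs + length ys"
proof -
  obtain m where ys: "ys = s # m @ [t]" by (rule list_path_interior[OF assms(2)])
  define zs where "zs = xs @ rev m"
  have xs: "xs \<noteq> []" "hd xs = s" "last xs = t" "s \<in> set xs" "t \<in> set xs"
    using assms(1) list_path_ends[OF assms(1)] by (simp_all add: list_path_def)
  have "zs @ [hd zs] = xs @ tl (rev ys)" using xs ys by (simp add: zs_def)
  moreover have "rev ys \<noteq> []" "hd (rev ys) = t" using ys by simp_all
  ultimately have edges: "cycle_edges zs = path_edges xs \<union> path_edges ys"
    using path_edges_append_tl[of xs "rev ys"] xs by (simp add: cycle_edges_def)
  have lengths: "length zs + 2 = length xs + length ys" by (simp add: zs_def ys)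
  have "distinct zs" using assms(1-3) ys by (auto simp: zs_def list_path_def)
  moreover have "3 \<le> length zs"
  proof (rule ccontr)
    assume "\<not> 3 \<le> length zs"
    moreover have "2 \<le> length xs" using assms(1) by (simp add: list_path_def)
    moreover have "length zs = length xs + length m" by (simp add: zs_def)
    ultimately have "length xs = 2" "length m = 0" by linarith+
    then have "length xs = 2" "m = []" by simp_all
    then show False using list_path_length_two[OF assms(1)] assms(4) ys by simp
  qed
  moreover have "set zs = set xs \<union> set ys" using xs ys by (auto simp: zs_def)
  ultimately show ?thesis using that edges lengths by blast
qed

lemma cycle_split:
  assumes "distinct zs" "u \<in> set zs" "v \<in> set zs" "u \<noteq> v"
  obtains as bs where "list_path as u v" "list_path bs u v"
    "set as \<subseteq> set zs" "set bs \<subseteq> set zs"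
    "path_edges as \<union> path_edges bs = cycle_edges zs"
    "length as + length bs = length zs + 2"
proof -
  obtain p q where zs: "zs = p @ u # q" using split_list[OF assms(2)] by blast
  then have "v \<in> set (q @ p)" using assms(3,4) by auto
  then obtain a b where qp: "q @ p = a @ v # b" using split_list by metis
  have rot: "cycle_edges zs = cycle_edges (u # a @ v # b)"
    using cycle_edges_append_commute[of p "u # q"] zs qp by simp
  have "distinct (u # q @ p)" using assms(1) zs by auto
  then have dist: "distinct (u # a @ v # b)" by (simp only: qp)
  define as where "as = u # a @ [v]"
  define bs where "bs = rev (v # b @ [u])"
  have "list_path as u v" "list_path bs u v"
    using dist by (auto simp: list_path_def as_def bs_def)
  moreover have "set as \<subseteq> set zs" "set bs \<subseteq> set zs"
    using zs arg_cong[OF qp, of set] by (auto simp: as_def bs_def)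
  moreover have "path_edges bs = path_edges (v # b @ [u])" by (simp only: bs_def path_edges_rev)
  then have "path_edges as \<union> path_edges bs = cycle_edges zs"
    using rot path_edges_append_tl[of "u # a @ [v]" "v # b @ [u]"]
    by (simp add: as_def cycle_edges_def)
  moreover have "length as + length bs = length zs + 2"
    using zs arg_cong[OF qp, of length] by (simp add: as_def bs_def)
  ultimately show ?thesis using that by blast
qed

section \<open>Ears\<close>

definition is_ear :: "'v list \<Rightarrow> 'v set \<Rightarrow> 'v set set \<Rightarrow> bool" where
  "is_ear P V F \<longleftrightarrow> list_path P (hd P) (last P) \<and> hd P \<in> V \<and> last P \<in> V \<and>
     set P \<inter> V \<subseteq> {hd P, last P} \<and> path_edges P \<inter> F = {}"

lemma is_earD:
  assumes "is_ear P V F"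
  shows "list_path P (hd P) (last P)" "hd P \<in> V" "last P \<in> V" "set P \<inter> V \<subseteq> {hd P, last P}"
    "path_edges P \<inter> F = {}"
  using assms unfolding is_ear_def by blast+

lemma is_ear_rev: "is_ear P V F \<Longrightarrow> is_ear (rev P) V F"
  unfolding is_ear_def using list_path_rev list_path_ends(4)
  by (fastforce simp: hd_rev last_rev)

lemma is_ear_mono:
  "is_ear P V F \<Longrightarrow> V' \<subseteq> V \<Longrightarrow> F' \<subseteq> F \<Longrightarrow> hd P \<in> V' \<Longrightarrow> last P \<in> V' \<Longrightarrow> is_ear P V' F'"
  unfolding is_ear_def by blast

lemma cycle_rotate_to_closing_edge:
  assumes "distinct cs" "f \<in> cycle_edges cs"
  obtains ds where "distinct ds" "set ds = set cs" "cycle_edges ds = cycle_edges cs"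
    "f = {last ds, hd ds}"
proof (cases "f = {last cs, hd cs}")
  case False
  then have "f \<in> path_edges cs" using assms(2) by (cases cs) (auto simp: cycle_edges_eq)
  then obtain p x y q where cs: "cs = p @ x # y # q" "f = {x, y}"
    using path_edges_split by metis
  define ds where "ds = (y # q) @ (p @ [x])"
  have "distinct ds" "set ds = set cs" "f = {last ds, hd ds}"
    using assms(1) cs by (auto simp: ds_def)
  moreover have "cycle_edges ds = cycle_edges cs"
    using cycle_edges_append_commute[of "p @ [x]" "y # q"] cs by (simp add: ds_def)
  ultimately show ?thesis using that by blast
qed (use assms that in blast)

lemma ear_through_closing_edge:
  assumes "distinct ds" "2 \<le> card (set ds \<inter> W)" "{last ds, hd ds} \<notin> F" "\<forall>e\<in>F. e \<subseteq> W"
  obtains P where "is_ear P W F" "path_edges P \<subseteq> cycle_edges ds"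
proof -
  have "set ds \<inter> W \<noteq> {}" using assms(2) by (intro notI) simp
  then obtain a w\<^sub>1 r where ds: "ds = a @ w\<^sub>1 # r" "w\<^sub>1 \<in> W" "\<forall>x\<in>set a. x \<notin> W"
    using split_list_first_prop[of ds "\<lambda>x. x \<in> W"] by blast
  have "\<not> set ds \<inter> W \<subseteq> {w\<^sub>1}" using assms(2) card_mono[of "{w\<^sub>1}" "set ds \<inter> W"] by auto
  then have "\<exists>x\<in>set r. x \<in> W" using ds by auto
  then obtain m w\<^sub>2 b where r: "r = m @ w\<^sub>2 # b" "w\<^sub>2 \<in> W" "\<forall>x\<in>set b. x \<notin> W"
    using split_list_last_prop[of r "\<lambda>x. x \<in> W"] by blast
  \<comment> \<open>from the last vertex of \<open>W\<close> on \<open>ds\<close> around the closing edge to the first one\<close>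
  define P where "P = w\<^sub>2 # b @ a @ [w\<^sub>1]"
  have ds': "ds = (a @ w\<^sub>1 # m) @ (w\<^sub>2 # b)" using ds r by simp
  have dist: "distinct P" using assms(1) ds' by (auto simp: P_def)
  have path: "list_path P (hd P) (last P)" using dist by (simp add: list_path_def P_def)
  have W: "set P \<inter> W \<subseteq> {hd P, last P}" using ds r by (auto simp: P_def)
  have "path_edges P \<subseteq> path_edges (P @ m)" by (auto simp: path_edges_append)
  also have "\<dots> \<subseteq> cycle_edges (P @ m)" by (rule path_edges_subset_cycle_edges)
  also have "\<dots> = cycle_edges ds"
    using cycle_edges_append_commute[of "a @ w\<^sub>1 # m" "w\<^sub>2 # b"] ds' by (simp add: P_def)
  finally have edges: "path_edges P \<subseteq> cycle_edges ds" .
  have "path_edges P \<inter> F = {}"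
  proof (rule ccontr)
    assume "path_edges P \<inter> F \<noteq> {}"
    then obtain e where e: "e \<in> path_edges P" "e \<in> F" by blast
    then have "e \<subseteq> {hd P, last P}" using W assms(4) path_edge_subset_set by blast
    moreover have "card e = 2" using card_path_edge[OF dist e(1)] .
    moreover have "card {hd P, last P} \<le> 2" by (simp add: card_insert_if)
    ultimately have "e = {hd P, last P}" by (intro card_seteq) simp_all
    then show False
    proof (cases "3 \<le> length P")
      case True
      then show False using hd_last_notin_path_edges[OF dist] e(1) \<open>e = _\<close> by simp
    next
      case False
      moreover have "length P = length a + length b + 2" by (simp add: P_def)
      ultimately have "length a + length b = 0" by linarith
      then have "a = []" "b = []" by simp_all
      then show False using assms(3) e(2) \<open>e = _\<close> ds r by (simp add: P_def insert_commute)
    qed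
  qed
  moreover have "hd P = w\<^sub>2" "last P = w\<^sub>1" by (simp_all add: P_def)
  ultimately show ?thesis
    using that[of P] path W edges ds(2) r(2) unfolding is_ear_def by simp
qed

lemma ear_in_cycle_list:
  assumes "distinct cs" "2 \<le> card (set cs \<inter> W)" "f \<in> cycle_edges cs" "f \<notin> F"
    "\<forall>e\<in>F. e \<subseteq> W"
  obtains P where "is_ear P W F" "path_edges P \<subseteq> cycle_edges cs"
proof -
  obtain ds where "distinct ds" "set ds = set cs" "cycle_edges ds = cycle_edges cs"
    "f = {last ds, hd ds}"
    by (rule cycle_rotate_to_closing_edge[OF assms(1,3)])
  then show ?thesis using ear_through_closing_edge[of ds W F] assms that by auto
qed

section \<open>Even rainbow cycles built from vertex lists\<close>

definition restrict_edges :: "('v,'c) cgraph \<Rightarrow> 'v set set \<Rightarrow> ('v,'c) cgraph" where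
  "restrict_edges G S = {p \<in> G. fst p \<in> S}"

definition has_even_rainbow_cycle :: "('v,'c) cgraph \<Rightarrow> bool" where
  "has_even_rainbow_cycle G \<longleftrightarrow> (\<exists>D. D \<subseteq> G \<and> even_cycle D \<and> rainbow D)"

lemma restrict_edges_subset: "restrict_edges G S \<subseteq> G"
  by (auto simp: restrict_edges_def)

lemma restrict_edges_mono: "S \<subseteq> T \<Longrightarrow> restrict_edges G S \<subseteq> restrict_edges G T"
  by (auto simp: restrict_edges_def)

lemma restrict_edges_Diff_subset:
  "colored_graph G \<Longrightarrow> e \<in> G \<Longrightarrow> restrict_edges G (S - {fst e}) \<subseteq> G - {e}"
  unfolding restrict_edges_def by auto

lemma colored_graph_restrict_edges: "colored_graph G \<Longrightarrow> colored_graph (restrict_edges G S)"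
  unfolding colored_graph_def restrict_edges_def by auto

lemma Es_restrict_edges: "S \<subseteq> Es G \<Longrightarrow> Es (restrict_edges G S) = S"
  unfolding Es_def restrict_edges_def by force

lemma Es_mono: "G \<subseteq> H \<Longrightarrow> Es G \<subseteq> Es H"
  by (auto simp: Es_def)

lemma Es_Un: "Es (G \<union> H) = Es G \<union> Es H"
  by (auto simp: Es_def)

lemma Vs_Un: "Vs (G \<union> H) = Vs G \<union> Vs H"
  by (auto simp: Vs_def)

lemma Vs_eq_Union_Es: "Vs G = \<Union> (Es G)"
  by (simp add: Vs_def Es_def)

lemma colored_graph_Un:
  "colored_graph G \<Longrightarrow> colored_graph H \<Longrightarrow> Es G \<inter> Es H = {} \<Longrightarrow> colored_graph (G \<union> H)"
  unfolding colored_graph_def Es_def by blast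

lemma card_Es: "colored_graph G \<Longrightarrow> card (Es G) = card G"
  unfolding colored_graph_def Es_def by (metis card_image inj_onI)

lemma rainbow_iff_inj_on: "finite G \<Longrightarrow> rainbow G \<longleftrightarrow> inj_on snd G"
  unfolding rainbow_def colors_def by (simp add: inj_on_iff_eq_card)

lemma even_rainbow_cycle_of_cycle_list:
  assumes "colored_graph G" "distinct zs" "3 \<le> length zs" "cycle_edges zs \<subseteq> Es G"
    "even (length zs)" "inj_on snd (restrict_edges G (cycle_edges zs))"
  shows "has_even_rainbow_cycle G"
proof -
  let ?D = "restrict_edges G (cycle_edges zs)"
  have D: "colored_graph ?D" "Es ?D = cycle_edges zs"
    using assms(1,4) by (simp_all add: colored_graph_restrict_edges Es_restrict_edges)
  moreover have "zs \<noteq> []" using assms(3) by auto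
  ultimately have "is_cycle ?D"
    unfolding is_cycle_def using assms(2,3) cycle_edges_conv_nth[of zs]
    by (intro conjI exI[of _ zs]) simp_all
  moreover have "card ?D = length zs"
    using card_Es[OF D(1)] D(2) card_cycle_edges[OF assms(2,3)] by simp
  moreover have "rainbow ?D"
    using D(1) assms(6) rainbow_iff_inj_on by (auto simp: colored_graph_def)
  ultimately show ?thesis using assms(5) restrict_edges_subset[of G]
    unfolding has_even_rainbow_cycle_def even_cycle_def by (intro exI[of _ ?D]) simp
qed

lemma even_rainbow_cycle_of_paths:
  assumes "colored_graph G" "list_path xs s t" "list_path ys s t"
    "set xs \<inter> set ys \<subseteq> {s, t}" "path_edges xs \<inter> path_edges ys = {}"
    "path_edges xs \<union> path_edges ys \<subseteq> Es G" "even (length xs + length ys)"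
    "inj_on snd (restrict_edges G (path_edges xs \<union> path_edges ys))"
  shows "has_even_rainbow_cycle G"
proof -
  obtain zs where zs: "distinct zs" "3 \<le> length zs"
    "cycle_edges zs = path_edges xs \<union> path_edges ys" "set zs = set xs \<union> set ys"
    "length zs + 2 = length xs + length ys"
    by (rule cycle_of_list_paths[OF assms(2-5)])
  have "even (length zs)" using zs(5) assms(7) by presburger
  then show ?thesis
    using even_rainbow_cycle_of_cycle_list[OF assms(1) zs(1,2)] zs(3) assms(6,8) by simp
qed

lemma even_rainbow_cycle_of_cycle_list_ear:
  assumes "colored_graph G" "distinct zs" "3 \<le> length zs" "cycle_edges zs \<subseteq> Es G"
    "is_ear P (set zs) (cycle_edges zs)" "path_edges P \<subseteq> Es G"
    "inj_on snd (restrict_edges G (cycle_edges zs \<union> path_edges P))"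
  shows "has_even_rainbow_cycle G"
proof (cases "even (length zs)")
  case True
  have "inj_on snd (restrict_edges G (cycle_edges zs))"
    by (rule inj_on_subset[OF assms(7) restrict_edges_mono]) simp
  then show ?thesis by (rule even_rainbow_cycle_of_cycle_list[OF assms(1-4) True])
next
  case False
  let ?u = "hd P" and ?v = "last P"
  have P: "list_path P ?u ?v" "?u \<in> set zs" "?v \<in> set zs"
    "set P \<inter> set zs \<subseteq> {?u, ?v}" "path_edges P \<inter> cycle_edges zs = {}"
    using is_earD[OF assms(5)] by simp_all
  obtain as bs where split: "list_path as ?u ?v" "list_path bs ?u ?v"
    "set as \<subseteq> set zs" "set bs \<subseteq> set zs"
    "path_edges as \<union> path_edges bs = cycle_edges zs" "length as + length bs = length zs + 2"
    using cycle_split[OF assms(2) P(2,3) list_path_ends(3)[OF P(1)]] by blast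
  \<comment> \<open>the two cycles formed by \<open>P\<close> with a half of the odd cycle have odd total length\<close>
  have "even (length P + length as) \<or> even (length P + length bs)"
    using False split(6) by presburger
  moreover have "has_even_rainbow_cycle G"
    if "list_path qs ?u ?v" "set qs \<subseteq> set zs" "path_edges qs \<subseteq> cycle_edges zs"
      "even (length P + length qs)" for qs
  proof (rule even_rainbow_cycle_of_paths[OF assms(1) P(1) that(1) _ _ _ that(4)])
    show "set P \<inter> set qs \<subseteq> {?u, ?v}" "path_edges P \<inter> path_edges qs = {}"
      "path_edges P \<union> path_edges qs \<subseteq> Es G"
      using P(4,5) assms(4,6) that(2,3) by blast+
    show "inj_on snd (restrict_edges G (path_edges P \<union> path_edges qs))"
      by (rule inj_on_subset[OF assms(7) restrict_edges_mono]) (use that(3) in blast)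
  qed
  ultimately show ?thesis using split by blast
qed

lemma even_rainbow_cycle_of_paths_or_ear:
  assumes "colored_graph G" "list_path xs s t" "list_path ys s t"
    "set xs \<inter> set ys \<subseteq> {s, t}" "path_edges xs \<inter> path_edges ys = {}"
    "is_ear P V F" "set xs \<union> set ys \<subseteq> V" "path_edges xs \<union> path_edges ys \<subseteq> F"
    "path_edges xs \<union> path_edges ys \<union> path_edges P \<subseteq> Es G"
    "inj_on snd (restrict_edges G (path_edges xs \<union> path_edges ys \<union> path_edges P))"
    "even (length xs + length ys) \<or> hd P \<in> set xs \<union> set ys \<and> last P \<in> set xs \<union> set ys"
  shows "has_even_rainbow_cycle G"
  using assms(11)
proof
  assume "even (length xs + length ys)"
  moreover have "inj_on snd (restrict_edges G (path_edges xs \<union> path_edges ys))"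
    by (rule inj_on_subset[OF assms(10) restrict_edges_mono]) blast
  ultimately show ?thesis using even_rainbow_cycle_of_paths[OF assms(1-5)] assms(9) by blast
next
  assume ends: "hd P \<in> set xs \<union> set ys \<and> last P \<in> set xs \<union> set ys"
  obtain zs where zs: "distinct zs" "3 \<le> length zs"
    "cycle_edges zs = path_edges xs \<union> path_edges ys" "set zs = set xs \<union> set ys"
    "length zs + 2 = length xs + length ys"
    by (rule cycle_of_list_paths[OF assms(2-5)])
  have "is_ear P (set zs) (cycle_edges zs)"
    using is_ear_mono[OF assms(6)] assms(7,8) ends zs(3,4) by simp
  then show ?thesis
    using even_rainbow_cycle_of_cycle_list_ear[OF assms(1) zs(1,2)] zs(3) assms(9,10) by simp
qed

section \<open>Theta graphs with an ear\<close>

text \<open>\<open>f\<^sub>1\<close> and \<open>f\<^sub>2\<close> stand for the two edges of equal colour in a bad piece.\<close>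

definition rainbow_avoiding :: "('v,'c) cgraph \<Rightarrow> 'v set set \<Rightarrow> 'v set \<Rightarrow> 'v set \<Rightarrow> bool" where
  "rainbow_avoiding G E f\<^sub>1 f\<^sub>2 \<longleftrightarrow>
     (\<forall>S\<subseteq>E. f\<^sub>1 \<notin> S \<or> f\<^sub>2 \<notin> S \<longrightarrow> inj_on snd (restrict_edges G S))"

lemma rainbow_avoidingI:
  assumes "inj_on snd (restrict_edges G (E - {f\<^sub>1}))" "inj_on snd (restrict_edges G (E - {f\<^sub>2}))"
  shows "rainbow_avoiding G E f\<^sub>1 f\<^sub>2"
  unfolding rainbow_avoiding_def
proof (intro allI impI)
  fix S assume "S \<subseteq> E" "f\<^sub>1 \<notin> S \<or> f\<^sub>2 \<notin> S"
  then have "S \<subseteq> E - {f\<^sub>1} \<or> S \<subseteq> E - {f\<^sub>2}" by blast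
  then show "inj_on snd (restrict_edges G S)"
    using inj_on_subset[OF assms(1) restrict_edges_mono] inj_on_subset[OF assms(2) restrict_edges_mono]
    by blast
qed

lemma rainbow_avoidingD:
  "rainbow_avoiding G E f\<^sub>1 f\<^sub>2 \<Longrightarrow> S \<subseteq> E \<Longrightarrow> f\<^sub>1 \<notin> S \<or> f\<^sub>2 \<notin> S \<Longrightarrow> inj_on snd (restrict_edges G S)"
  unfolding rainbow_avoiding_def by blast

lemma even_rainbow_cycle_of_triangle:
  assumes "colored_graph G" "list_path xs a b" "list_path ys b c" "list_path zs a c"
    "set xs \<inter> set ys \<subseteq> {b}" "set xs \<inter> set zs \<subseteq> {a}" "set ys \<inter> set zs \<subseteq> {c}"
    "odd (length xs + length ys + length zs)"
    "path_edges xs \<union> path_edges ys \<union> path_edges zs \<subseteq> E" "E \<subseteq> Es G"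
    "rainbow_avoiding G E f\<^sub>1 f\<^sub>2"
    "f\<^sub>1 \<notin> path_edges xs \<union> path_edges ys \<union> path_edges zs \<or>
     f\<^sub>2 \<notin> path_edges xs \<union> path_edges ys \<union> path_edges zs"
  shows "has_even_rainbow_cycle G"
proof -
  note xys = list_path_append_tl[OF assms(2,3,5)]
  have "path_edges xs \<inter> path_edges zs = {}" "path_edges ys \<inter> path_edges zs = {}"
    using assms(2,3,6,7) path_edges_disjoint_if_meet_singleton by (metis list_path_def)+
  then have "path_edges (xs @ tl ys) \<inter> path_edges zs = {}" using xys(2) by auto
  moreover have "set (xs @ tl ys) \<inter> set zs \<subseteq> {a, c}" using xys(3) assms(6,7) by auto
  moreover have "even (length (xs @ tl ys) + length zs)" using xys(4) assms(8) by presburger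
  moreover have "inj_on snd (restrict_edges G (path_edges xs \<union> path_edges ys \<union> path_edges zs))"
    using rainbow_avoidingD[OF assms(11,9,12)] .
  ultimately show ?thesis
    using even_rainbow_cycle_of_paths[OF assms(1) xys(1) assms(4)] xys(2) order_trans[OF assms(9,10)]
    by simp
qed

text \<open>Lengths of lists count vertices: the hypotheses \<open>even\<close> say that the cycles
  \<open>a\<^sub>1 b\<^sub>1 c\<close> and \<open>a\<^sub>2 b\<^sub>2 c\<close> are odd.\<close>

lemma even_rainbow_cycle_of_subdivided_K4:
  assumes G: "colored_graph G"
    and paths: "list_path a\<^sub>1 s u" "list_path b\<^sub>1 u t" "list_path a\<^sub>2 s v" "list_path b\<^sub>2 v t"
      "list_path c s t" "list_path p u v"
    and meets: "set a\<^sub>1 \<inter> set p \<subseteq> {u}" "set b\<^sub>1 \<inter> set p \<subseteq> {u}"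
      "set a\<^sub>2 \<inter> set p \<subseteq> {v}" "set b\<^sub>2 \<inter> set p \<subseteq> {v}"
      "set a\<^sub>1 \<inter> set a\<^sub>2 \<subseteq> {s}" "set b\<^sub>1 \<inter> set b\<^sub>2 \<subseteq> {t}"
      "set a\<^sub>1 \<inter> set b\<^sub>2 = {}" "set b\<^sub>1 \<inter> set a\<^sub>2 = {}"
      "set a\<^sub>1 \<inter> set c \<subseteq> {s}" "set b\<^sub>1 \<inter> set c \<subseteq> {t}"
      "set a\<^sub>2 \<inter> set c \<subseteq> {s}" "set b\<^sub>2 \<inter> set c \<subseteq> {t}" "set p \<inter> set c = {}"
    and even: "even (length a\<^sub>1 + length b\<^sub>1 + length c)" "even (length a\<^sub>2 + length b\<^sub>2 + length c)"
    and E: "path_edges a\<^sub>1 \<union> path_edges b\<^sub>1 \<union> path_edges a\<^sub>2 \<union> path_edges b\<^sub>2 \<union> path_edges c \<union>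
      path_edges p \<subseteq> E" "E \<subseteq> Es G" "rainbow_avoiding G E f\<^sub>1 f\<^sub>2"
    and f: "f\<^sub>1 \<notin> path_edges a\<^sub>1 \<or> f\<^sub>1 \<notin> path_edges b\<^sub>1" "f\<^sub>2 \<notin> path_edges a\<^sub>2 \<or> f\<^sub>2 \<notin> path_edges b\<^sub>2"
      "f\<^sub>1 \<notin> path_edges a\<^sub>2 \<union> path_edges b\<^sub>2 \<union> path_edges c \<union> path_edges p"
      "f\<^sub>2 \<notin> path_edges a\<^sub>1 \<union> path_edges b\<^sub>1 \<union> path_edges c \<union> path_edges p"
  shows "has_even_rainbow_cycle G"
proof -
  note tri = even_rainbow_cycle_of_triangle[OF G _ _ _ _ _ _ _ _ E(2,3)]
  have AA: ?thesis if "odd (length a\<^sub>1 + length p + length a\<^sub>2)" "f\<^sub>1 \<notin> path_edges a\<^sub>1 \<or> f\<^sub>2 \<notin> path_edges a\<^sub>2"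
  proof (rule tri[OF paths(1,6,3) meets(1,5) _ that(1)])
    show "set p \<inter> set a\<^sub>2 \<subseteq> {v}" using meets(3) by blast
  qed (use that(2) E(1) f(3,4) in auto)
  have BB: ?thesis if "odd (length b\<^sub>1 + length p + length b\<^sub>2)" "f\<^sub>1 \<notin> path_edges b\<^sub>1 \<or> f\<^sub>2 \<notin> path_edges b\<^sub>2"
  proof (rule tri[OF list_path_rev[OF paths(2)] paths(6) list_path_rev[OF paths(4)]])
    show "set (rev b\<^sub>1) \<inter> set p \<subseteq> {u}" "set (rev b\<^sub>1) \<inter> set (rev b\<^sub>2) \<subseteq> {t}"
      "set p \<inter> set (rev b\<^sub>2) \<subseteq> {v}" using meets(2,4,6) by auto
  qed (use that E(1) f(3,4) in auto)
  have "set a\<^sub>1 \<inter> set p \<subseteq> {u}" "set (rev b\<^sub>1) \<inter> set p \<subseteq> {u}" using meets(1,2) by auto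
  note a\<^sub>1p = list_path_append_tl[OF paths(1,6) this(1)]
    and b\<^sub>1p = list_path_append_tl[OF list_path_rev[OF paths(2)] paths(6) this(2)]
  have AB: ?thesis if "even (length a\<^sub>1 + length p + length b\<^sub>2 + length c)"
    "f\<^sub>1 \<notin> path_edges a\<^sub>1 \<or> f\<^sub>2 \<notin> path_edges b\<^sub>2"
  proof (rule tri[OF a\<^sub>1p(1) paths(4,5)])
    show "set (a\<^sub>1 @ tl p) \<inter> set b\<^sub>2 \<subseteq> {v}" "set (a\<^sub>1 @ tl p) \<inter> set c \<subseteq> {s}"
      using a\<^sub>1p(3) meets(4,7,9,13) by auto
    show "odd (length (a\<^sub>1 @ tl p) + length b\<^sub>2 + length c)" using a\<^sub>1p(4) that(1) by presburger
  qed (use meets(12) a\<^sub>1p(2) that(2) E(1) f(3,4) in auto)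
  have BA: ?thesis if "even (length b\<^sub>1 + length p + length a\<^sub>2 + length c)"
    "f\<^sub>1 \<notin> path_edges b\<^sub>1 \<or> f\<^sub>2 \<notin> path_edges a\<^sub>2"
  proof (rule tri[OF b\<^sub>1p(1) list_path_rev[OF paths(3)] list_path_rev[OF paths(5)]])
    show "set (rev b\<^sub>1 @ tl p) \<inter> set (rev a\<^sub>2) \<subseteq> {v}"
      "set (rev b\<^sub>1 @ tl p) \<inter> set (rev c) \<subseteq> {t}" "set (rev a\<^sub>2) \<inter> set (rev c) \<subseteq> {s}"
      using b\<^sub>1p(3) meets(3,8,10,11,13) by auto
    have "length (rev b\<^sub>1 @ tl p) + length (rev a\<^sub>2) + length (rev c) + 1
      = length b\<^sub>1 + length p + length a\<^sub>2 + length c"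
      using b\<^sub>1p(4) by simp
    then show "odd (length (rev b\<^sub>1 @ tl p) + length (rev a\<^sub>2) + length (rev c))"
      using that(1) by presburger
  qed (use b\<^sub>1p(2) that(2) E(1) f(3,4) in auto)
  \<comment> \<open>\<open>a\<^sub>1 p a\<^sub>2\<close> and \<open>b\<^sub>1 p b\<^sub>2\<close> have equal parity, \<open>a\<^sub>1 p b\<^sub>2 c\<close> and \<open>b\<^sub>1 p a\<^sub>2 c\<close> the opposite one\<close>
  have "odd (length a\<^sub>1 + length p + length a\<^sub>2) \<and> odd (length b\<^sub>1 + length p + length b\<^sub>2) \<or>
    even (length a\<^sub>1 + length p + length b\<^sub>2 + length c) \<and>
    even (length b\<^sub>1 + length p + length a\<^sub>2 + length c)"
    using even by presburger
  then show ?thesis using AA BB AB BA f(1,2) by blast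
qed

definition list_theta :: "'v list \<Rightarrow> 'v list \<Rightarrow> 'v list \<Rightarrow> 'v \<Rightarrow> 'v \<Rightarrow> bool" where
  "list_theta xs\<^sub>1 xs\<^sub>2 xs\<^sub>3 s t \<longleftrightarrow>
     list_path xs\<^sub>1 s t \<and> list_path xs\<^sub>2 s t \<and> list_path xs\<^sub>3 s t \<and>
     set xs\<^sub>1 \<inter> set xs\<^sub>2 \<subseteq> {s, t} \<and> set xs\<^sub>1 \<inter> set xs\<^sub>3 \<subseteq> {s, t} \<and>
     set xs\<^sub>2 \<inter> set xs\<^sub>3 \<subseteq> {s, t} \<and>
     path_edges xs\<^sub>1 \<inter> path_edges xs\<^sub>2 = {} \<and> path_edges xs\<^sub>1 \<inter> path_edges xs\<^sub>3 = {} \<and>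
     path_edges xs\<^sub>2 \<inter> path_edges xs\<^sub>3 = {}"

lemma list_thetaD:
  assumes "list_theta xs\<^sub>1 xs\<^sub>2 xs\<^sub>3 s t"
  shows "list_path xs\<^sub>1 s t" "list_path xs\<^sub>2 s t" "list_path xs\<^sub>3 s t"
    "set xs\<^sub>1 \<inter> set xs\<^sub>2 \<subseteq> {s, t}" "set xs\<^sub>1 \<inter> set xs\<^sub>3 \<subseteq> {s, t}" "set xs\<^sub>2 \<inter> set xs\<^sub>3 \<subseteq> {s, t}"
    "path_edges xs\<^sub>1 \<inter> path_edges xs\<^sub>2 = {}" "path_edges xs\<^sub>1 \<inter> path_edges xs\<^sub>3 = {}"
    "path_edges xs\<^sub>2 \<inter> path_edges xs\<^sub>3 = {}"
  using assms unfolding list_theta_def by simp_all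

lemma even_rainbow_cycle_of_crossing_ear:
  assumes G: "colored_graph G" and theta: "list_theta xs\<^sub>1 xs\<^sub>2 xs\<^sub>3 s t"
    and ear: "is_ear P (set xs\<^sub>1 \<union> set xs\<^sub>2 \<union> set xs\<^sub>3)
      (path_edges xs\<^sub>1 \<union> path_edges xs\<^sub>2 \<union> path_edges xs\<^sub>3)"
    and ends: "hd P \<notin> set xs\<^sub>2 \<union> set xs\<^sub>3" "last P \<notin> set xs\<^sub>1 \<union> set xs\<^sub>3"
    and odd: "odd (length xs\<^sub>1 + length xs\<^sub>3)" "odd (length xs\<^sub>2 + length xs\<^sub>3)"
    and E: "path_edges xs\<^sub>1 \<union> path_edges xs\<^sub>2 \<union> path_edges xs\<^sub>3 \<union> path_edges P \<subseteq> E" "E \<subseteq> Es G"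
      "rainbow_avoiding G E f\<^sub>1 f\<^sub>2"
    and f: "f\<^sub>1 \<in> path_edges xs\<^sub>1" "f\<^sub>2 \<in> path_edges xs\<^sub>2"
  shows "has_even_rainbow_cycle G"
proof -
  let ?u = "hd P" and ?v = "last P"
  note th = list_thetaD[OF theta] and P = is_earD[OF ear]
  have st: "s \<in> set xs\<^sub>3" "t \<in> set xs\<^sub>3" using list_path_ends[OF th(3)] by simp_all
  have u: "?u \<in> set xs\<^sub>1" "?u \<noteq> s" "?u \<noteq> t" using P(2) ends(1) st by auto
  have v: "?v \<in> set xs\<^sub>2" "?v \<noteq> s" "?v \<noteq> t" using P(3) ends(2) st by auto
  obtain a\<^sub>1 b\<^sub>1 where s\<^sub>1: "list_path a\<^sub>1 s ?u" "list_path b\<^sub>1 ?u t"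
    "set a\<^sub>1 \<union> set b\<^sub>1 = set xs\<^sub>1" "set a\<^sub>1 \<inter> set b\<^sub>1 \<subseteq> {?u}"
    "path_edges a\<^sub>1 \<union> path_edges b\<^sub>1 = path_edges xs\<^sub>1" "path_edges a\<^sub>1 \<inter> path_edges b\<^sub>1 = {}"
    "length a\<^sub>1 + length b\<^sub>1 = length xs\<^sub>1 + 1"
    by (rule list_path_split[OF th(1) u])
  obtain a\<^sub>2 b\<^sub>2 where s\<^sub>2: "list_path a\<^sub>2 s ?v" "list_path b\<^sub>2 ?v t"
    "set a\<^sub>2 \<union> set b\<^sub>2 = set xs\<^sub>2" "set a\<^sub>2 \<inter> set b\<^sub>2 \<subseteq> {?v}"
    "path_edges a\<^sub>2 \<union> path_edges b\<^sub>2 = path_edges xs\<^sub>2" "path_edges a\<^sub>2 \<inter> path_edges b\<^sub>2 = {}"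
    "length a\<^sub>2 + length b\<^sub>2 = length xs\<^sub>2 + 1"
    by (rule list_path_split[OF th(2) v])
  have sub: "set a\<^sub>1 \<subseteq> set xs\<^sub>1" "set b\<^sub>1 \<subseteq> set xs\<^sub>1" "set a\<^sub>2 \<subseteq> set xs\<^sub>2" "set b\<^sub>2 \<subseteq> set xs\<^sub>2"
    "path_edges a\<^sub>1 \<subseteq> path_edges xs\<^sub>1" "path_edges b\<^sub>1 \<subseteq> path_edges xs\<^sub>1"
    "path_edges a\<^sub>2 \<subseteq> path_edges xs\<^sub>2" "path_edges b\<^sub>2 \<subseteq> path_edges xs\<^sub>2"
    using s\<^sub>1(3,5) s\<^sub>2(3,5) by auto
  have out: "t \<notin> set a\<^sub>1" "s \<notin> set b\<^sub>1" "t \<notin> set a\<^sub>2" "s \<notin> set b\<^sub>2"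
    using s\<^sub>1(4) s\<^sub>2(4) u(2,3) v(2,3) list_path_ends(1,2)[OF s\<^sub>1(1)] list_path_ends(1,2)[OF s\<^sub>1(2)]
      list_path_ends(1,2)[OF s\<^sub>2(1)] list_path_ends(1,2)[OF s\<^sub>2(2)] by auto
  have "set P \<inter> set xs\<^sub>1 \<subseteq> {?u}" "set P \<inter> set xs\<^sub>2 \<subseteq> {?v}" "set P \<inter> set xs\<^sub>3 \<subseteq> {}"
    using P(4) ends by blast+
  then have meets:
    "set a\<^sub>1 \<inter> set P \<subseteq> {?u}" "set b\<^sub>1 \<inter> set P \<subseteq> {?u}"
    "set a\<^sub>2 \<inter> set P \<subseteq> {?v}" "set b\<^sub>2 \<inter> set P \<subseteq> {?v}"
    "set a\<^sub>1 \<inter> set a\<^sub>2 \<subseteq> {s}" "set b\<^sub>1 \<inter> set b\<^sub>2 \<subseteq> {t}"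
    "set a\<^sub>1 \<inter> set b\<^sub>2 = {}" "set b\<^sub>1 \<inter> set a\<^sub>2 = {}"
    "set a\<^sub>1 \<inter> set xs\<^sub>3 \<subseteq> {s}" "set b\<^sub>1 \<inter> set xs\<^sub>3 \<subseteq> {t}"
    "set a\<^sub>2 \<inter> set xs\<^sub>3 \<subseteq> {s}" "set b\<^sub>2 \<inter> set xs\<^sub>3 \<subseteq> {t}" "set P \<inter> set xs\<^sub>3 = {}"
    using sub(1-4) out th(4-6) by blast+
  have "even (length a\<^sub>1 + length b\<^sub>1 + length xs\<^sub>3)" "even (length a\<^sub>2 + length b\<^sub>2 + length xs\<^sub>3)"
    using s\<^sub>1(7) s\<^sub>2(7) odd by presburger+
  moreover have "path_edges a\<^sub>1 \<union> path_edges b\<^sub>1 \<union> path_edges a\<^sub>2 \<union> path_edges b\<^sub>2 \<union>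
      path_edges xs\<^sub>3 \<union> path_edges P \<subseteq> E"
    using sub(5-8) E(1) by blast
  moreover have "f\<^sub>1 \<notin> path_edges a\<^sub>1 \<or> f\<^sub>1 \<notin> path_edges b\<^sub>1" "f\<^sub>2 \<notin> path_edges a\<^sub>2 \<or> f\<^sub>2 \<notin> path_edges b\<^sub>2"
    using s\<^sub>1(6) s\<^sub>2(6) by blast+
  moreover have "f\<^sub>1 \<notin> path_edges a\<^sub>2 \<union> path_edges b\<^sub>2 \<union> path_edges xs\<^sub>3 \<union> path_edges P"
    "f\<^sub>2 \<notin> path_edges a\<^sub>1 \<union> path_edges b\<^sub>1 \<union> path_edges xs\<^sub>3 \<union> path_edges P"
    using f sub(5-8) th(7-9) P(5) by blast+
  ultimately show ?thesis
    by (rule even_rainbow_cycle_of_subdivided_K4[OF G s\<^sub>1(1,2) s\<^sub>2(1,2) th(3) P(1) meets _ _ _ E(2,3)])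
qed

lemma even_rainbow_cycle_of_list_theta_ear:
  assumes G: "colored_graph G" and theta: "list_theta xs\<^sub>1 xs\<^sub>2 xs\<^sub>3 s t"
    and ear: "is_ear P (set xs\<^sub>1 \<union> set xs\<^sub>2 \<union> set xs\<^sub>3)
      (path_edges xs\<^sub>1 \<union> path_edges xs\<^sub>2 \<union> path_edges xs\<^sub>3)"
    and E: "path_edges xs\<^sub>1 \<union> path_edges xs\<^sub>2 \<union> path_edges xs\<^sub>3 \<union> path_edges P \<subseteq> E" "E \<subseteq> Es G"
      "rainbow_avoiding G E f\<^sub>1 f\<^sub>2"
    and f: "f\<^sub>1 \<in> path_edges xs\<^sub>1" "f\<^sub>2 \<in> path_edges xs\<^sub>2"
  shows "has_even_rainbow_cycle G"
proof -
  note th = list_thetaD[OF theta] and P = is_earD[OF ear]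
  have pair\<^sub>1\<^sub>3: ?thesis
    if "even (length xs\<^sub>1 + length xs\<^sub>3) \<or> hd P \<in> set xs\<^sub>1 \<union> set xs\<^sub>3 \<and> last P \<in> set xs\<^sub>1 \<union> set xs\<^sub>3"
  proof (rule even_rainbow_cycle_of_paths_or_ear[OF G th(1,3,5,8) ear _ _ _ _ that])
    show "inj_on snd (restrict_edges G (path_edges xs\<^sub>1 \<union> path_edges xs\<^sub>3 \<union> path_edges P))"
      by (rule rainbow_avoidingD[OF E(3)]) (use E(1) f(2) th(7,9) P(5) in auto)
  qed (use E(1,2) in auto)
  have pair\<^sub>2\<^sub>3: ?thesis
    if "even (length xs\<^sub>2 + length xs\<^sub>3) \<or> hd P \<in> set xs\<^sub>2 \<union> set xs\<^sub>3 \<and> last P \<in> set xs\<^sub>2 \<union> set xs\<^sub>3"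
  proof (rule even_rainbow_cycle_of_paths_or_ear[OF G th(2,3,6,9) ear _ _ _ _ that])
    show "inj_on snd (restrict_edges G (path_edges xs\<^sub>2 \<union> path_edges xs\<^sub>3 \<union> path_edges P))"
      by (rule rainbow_avoidingD[OF E(3)]) (use E(1) f(1) th(7,8) P(5) in auto)
  qed (use E(1,2) in auto)
  have cross: ?thesis
    if "Q = P \<or> Q = rev P" "hd Q \<notin> set xs\<^sub>2 \<union> set xs\<^sub>3" "last Q \<notin> set xs\<^sub>1 \<union> set xs\<^sub>3"
      "odd (length xs\<^sub>1 + length xs\<^sub>3)" "odd (length xs\<^sub>2 + length xs\<^sub>3)" for Q
  proof (rule even_rainbow_cycle_of_crossing_ear[OF G theta _ that(2-5) _ E(2,3) f])
    show "is_ear Q (set xs\<^sub>1 \<union> set xs\<^sub>2 \<union> set xs\<^sub>3) (path_edges xs\<^sub>1 \<union> path_edges xs\<^sub>2 \<union> path_edges xs\<^sub>3)"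
      using that(1) ear is_ear_rev by blast
    show "path_edges xs\<^sub>1 \<union> path_edges xs\<^sub>2 \<union> path_edges xs\<^sub>3 \<union> path_edges Q \<subseteq> E"
      using that(1) E(1) by auto
  qed
  have "hd P \<in> set xs\<^sub>1 \<union> set xs\<^sub>2 \<union> set xs\<^sub>3" "last P \<in> set xs\<^sub>1 \<union> set xs\<^sub>2 \<union> set xs\<^sub>3"
    using P(2,3) by simp_all
  \<comment> \<open>if neither pair applies, the ends of the ear are inner vertices of \<open>xs\<^sub>1\<close> and \<open>xs\<^sub>2\<close>\<close>
  then show ?thesis
    using pair\<^sub>1\<^sub>3 pair\<^sub>2\<^sub>3 cross[of P] cross[of "rev P"] list_path_ends(4)[OF P(1)]
    by (cases "even (length xs\<^sub>1 + length xs\<^sub>3) \<or> even (length xs\<^sub>2 + length xs\<^sub>3)")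
      (auto simp: hd_rev last_rev)
qed

lemma is_path_obtain_list:
  assumes "is_path G s t"
  obtains xs where "list_path xs s t" "Es G = path_edges xs" "Vs G = set xs"
proof -
  obtain xs where xs: "list_path xs s t" "Es G = {{xs ! i, xs ! (i + 1)} | i. i + 1 < length xs}"
    using assms unfolding is_path_def list_path_def by blast
  then have "Es G = path_edges xs" by (simp add: path_edges_conv_nth)
  moreover have "Vs G = set xs"
    using xs(1) calculation by (simp add: Vs_eq_Union_Es Union_path_edges list_path_def)
  ultimately show ?thesis using that xs(1) by blast
qed

lemma is_cycle_obtain_list:
  assumes "is_cycle G"
  obtains cs where "distinct cs" "3 \<le> length cs" "Es G = cycle_edges cs" "Vs G = set cs"
proof -
  obtain cs where cs: "distinct cs" "3 \<le> length cs"
    "Es G = {{cs ! i, cs ! ((i + 1) mod length cs)} | i. i < length cs}"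
    using assms unfolding is_cycle_def by blast
  moreover have "cs \<noteq> []" using cs(2) by auto
  ultimately have E: "Es G = cycle_edges cs" by (simp add: cycle_edges_conv_nth)
  moreover have "Vs G = set cs" using cs(2) E by (simp add: Vs_eq_Union_Es Union_cycle_edges)
  ultimately show ?thesis using that cs(1,2) by blast
qed

lemma theta_of_obtain_lists:
  assumes "theta_of X P\<^sub>1 P\<^sub>2 P\<^sub>3"
  obtains s t xs\<^sub>1 xs\<^sub>2 xs\<^sub>3 where "list_theta xs\<^sub>1 xs\<^sub>2 xs\<^sub>3 s t"
    "Es P\<^sub>1 = path_edges xs\<^sub>1" "Es P\<^sub>2 = path_edges xs\<^sub>2" "Es P\<^sub>3 = path_edges xs\<^sub>3"
    "Vs P\<^sub>1 = set xs\<^sub>1" "Vs P\<^sub>2 = set xs\<^sub>2" "Vs P\<^sub>3 = set xs\<^sub>3"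
proof -
  obtain s t where th: "is_path P\<^sub>1 s t" "is_path P\<^sub>2 s t" "is_path P\<^sub>3 s t"
    "Vs P\<^sub>1 \<inter> Vs P\<^sub>2 \<subseteq> {s, t}" "Vs P\<^sub>1 \<inter> Vs P\<^sub>3 \<subseteq> {s, t}" "Vs P\<^sub>2 \<inter> Vs P\<^sub>3 \<subseteq> {s, t}"
    "Es P\<^sub>1 \<inter> Es P\<^sub>2 = {}" "Es P\<^sub>1 \<inter> Es P\<^sub>3 = {}" "Es P\<^sub>2 \<inter> Es P\<^sub>3 = {}"
    using assms unfolding theta_of_def by blast
  obtain xs\<^sub>1 where "list_path xs\<^sub>1 s t" "Es P\<^sub>1 = path_edges xs\<^sub>1" "Vs P\<^sub>1 = set xs\<^sub>1"
    by (rule is_path_obtain_list[OF th(1)])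
  moreover obtain xs\<^sub>2 where "list_path xs\<^sub>2 s t" "Es P\<^sub>2 = path_edges xs\<^sub>2" "Vs P\<^sub>2 = set xs\<^sub>2"
    by (rule is_path_obtain_list[OF th(2)])
  moreover obtain xs\<^sub>3 where "list_path xs\<^sub>3 s t" "Es P\<^sub>3 = path_edges xs\<^sub>3" "Vs P\<^sub>3 = set xs\<^sub>3"
    by (rule is_path_obtain_list[OF th(3)])
  ultimately show ?thesis using th(4-9) that unfolding list_theta_def by simp
qed

lemma colored_graph_theta_of:
  assumes "theta_of X P\<^sub>1 P\<^sub>2 P\<^sub>3"
  shows "colored_graph X"
proof -
  obtain s t where th: "X = P\<^sub>1 \<union> P\<^sub>2 \<union> P\<^sub>3" "is_path P\<^sub>1 s t" "is_path P\<^sub>2 s t" "is_path P\<^sub>3 s t"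
    "Es P\<^sub>1 \<inter> Es P\<^sub>2 = {}" "Es P\<^sub>1 \<inter> Es P\<^sub>3 = {}" "Es P\<^sub>2 \<inter> Es P\<^sub>3 = {}"
    using assms unfolding theta_of_def by blast
  then have "colored_graph (P\<^sub>1 \<union> P\<^sub>2)" by (intro colored_graph_Un) (simp_all add: is_path_def)
  moreover have "Es (P\<^sub>1 \<union> P\<^sub>2) \<inter> Es P\<^sub>3 = {}" using th(6,7) by (auto simp: Es_Un)
  ultimately show ?thesis using th(1,4) colored_graph_Un by (auto simp: is_path_def)
qed

lemma theta_of_swap12:
  assumes "theta_of X P\<^sub>1 P\<^sub>2 P\<^sub>3"
  shows "theta_of X P\<^sub>2 P\<^sub>1 P\<^sub>3"
proof -
  obtain s t where "X = P\<^sub>1 \<union> P\<^sub>2 \<union> P\<^sub>3" "s \<noteq> t" "is_path P\<^sub>1 s t" "is_path P\<^sub>2 s t" "is_path P\<^sub>3 s t"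
    "Vs P\<^sub>1 \<inter> Vs P\<^sub>2 \<subseteq> {s, t}" "Vs P\<^sub>1 \<inter> Vs P\<^sub>3 \<subseteq> {s, t}" "Vs P\<^sub>2 \<inter> Vs P\<^sub>3 \<subseteq> {s, t}"
    "Es P\<^sub>1 \<inter> Es P\<^sub>2 = {}" "Es P\<^sub>1 \<inter> Es P\<^sub>3 = {}" "Es P\<^sub>2 \<inter> Es P\<^sub>3 = {}"
    using assms unfolding theta_of_def by blast
  then show ?thesis unfolding theta_of_def
    by (intro conjI exI[of _ s] exI[of _ t]) (auto simp: Int_commute)
qed

lemma theta_of_swap23:
  assumes "theta_of X P\<^sub>1 P\<^sub>2 P\<^sub>3"
  shows "theta_of X P\<^sub>1 P\<^sub>3 P\<^sub>2"
proof -
  obtain s t where "X = P\<^sub>1 \<union> P\<^sub>2 \<union> P\<^sub>3" "s \<noteq> t" "is_path P\<^sub>1 s t" "is_path P\<^sub>2 s t" "is_path P\<^sub>3 s t"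
    "Vs P\<^sub>1 \<inter> Vs P\<^sub>2 \<subseteq> {s, t}" "Vs P\<^sub>1 \<inter> Vs P\<^sub>3 \<subseteq> {s, t}" "Vs P\<^sub>2 \<inter> Vs P\<^sub>3 \<subseteq> {s, t}"
    "Es P\<^sub>1 \<inter> Es P\<^sub>2 = {}" "Es P\<^sub>1 \<inter> Es P\<^sub>3 = {}" "Es P\<^sub>2 \<inter> Es P\<^sub>3 = {}"
    using assms unfolding theta_of_def by blast
  then show ?thesis unfolding theta_of_def
    by (intro conjI exI[of _ s] exI[of _ t]) (auto simp: Int_commute)
qed

lemma inj_on_Diff_of_almost_rainbow:
  assumes "finite X" "almost_rainbow X" "e \<in> X" "e' \<in> X" "e \<noteq> e'" "snd e = snd e'"
  shows "inj_on snd (X - {e})"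
proof -
  have "snd ` X \<subseteq> snd ` (X - {e})"
  proof
    fix c assume "c \<in> snd ` X"
    then obtain x where "x \<in> X" "c = snd x" by blast
    then show "c \<in> snd ` (X - {e})" using assms(3-6) by (cases "x = e") auto
  qed
  then have "snd ` (X - {e}) = snd ` X" by auto
  then have "card (snd ` (X - {e})) = card (X - {e})"
    using assms(1-3) by (simp add: almost_rainbow_def colors_def)
  then show ?thesis using assms(1) by (simp add: inj_on_iff_eq_card)
qed

lemma bad_piece_twin_edges:
  assumes "bad_piece X"
  obtains P\<^sub>1 P\<^sub>2 P\<^sub>3 e\<^sub>1 e\<^sub>2 where "theta_of X P\<^sub>1 P\<^sub>2 P\<^sub>3" "e\<^sub>1 \<in> P\<^sub>1" "e\<^sub>2 \<in> P\<^sub>2"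
    "inj_on snd (X - {e\<^sub>1})" "inj_on snd (X - {e\<^sub>2})"
proof -
  obtain Q\<^sub>1 Q\<^sub>2 Q\<^sub>3 where th: "theta_of X Q\<^sub>1 Q\<^sub>2 Q\<^sub>3" "rainbow Q\<^sub>1" "rainbow Q\<^sub>2" "rainbow Q\<^sub>3"
    and ar: "almost_rainbow X"
    using assms unfolding bad_piece_def by blast
  have fin: "finite X" using colored_graph_theta_of[OF th(1)] by (simp add: colored_graph_def)
  have X: "X = Q\<^sub>1 \<union> Q\<^sub>2 \<union> Q\<^sub>3" using th(1) unfolding theta_of_def by blast
  have "\<not> inj_on snd X" using ar fin by (simp add: almost_rainbow_def colors_def inj_on_iff_eq_card)
  then obtain e\<^sub>1 e\<^sub>2 where e: "e\<^sub>1 \<in> X" "e\<^sub>2 \<in> X" "e\<^sub>1 \<noteq> e\<^sub>2" "snd e\<^sub>1 = snd e\<^sub>2"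
    unfolding inj_on_def by blast
  have "\<not> (e\<^sub>1 \<in> Q \<and> e\<^sub>2 \<in> Q)" if "rainbow Q" "Q \<subseteq> X" for Q
    using that e(3,4) fin rainbow_iff_inj_on[of Q] finite_subset unfolding inj_on_def by blast
  then have apart: "\<not> (e\<^sub>1 \<in> Q\<^sub>1 \<and> e\<^sub>2 \<in> Q\<^sub>1)" "\<not> (e\<^sub>1 \<in> Q\<^sub>2 \<and> e\<^sub>2 \<in> Q\<^sub>2)" "\<not> (e\<^sub>1 \<in> Q\<^sub>3 \<and> e\<^sub>2 \<in> Q\<^sub>3)"
    using th(2-4) X by blast+
  have "theta_of X Q\<^sub>2 Q\<^sub>1 Q\<^sub>3" "theta_of X Q\<^sub>1 Q\<^sub>3 Q\<^sub>2" "theta_of X Q\<^sub>3 Q\<^sub>1 Q\<^sub>2"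
    "theta_of X Q\<^sub>2 Q\<^sub>3 Q\<^sub>1" "theta_of X Q\<^sub>3 Q\<^sub>2 Q\<^sub>1"
    using th(1) theta_of_swap12 theta_of_swap23 by blast+
  then have "\<exists>P\<^sub>1 P\<^sub>2 P\<^sub>3. theta_of X P\<^sub>1 P\<^sub>2 P\<^sub>3 \<and> e\<^sub>1 \<in> P\<^sub>1 \<and> e\<^sub>2 \<in> P\<^sub>2"
    using th(1) e(1,2) X apart by blast
  then show ?thesis
    using that inj_on_Diff_of_almost_rainbow[OF fin ar] e by metis
qed

lemma even_rainbow_cycle_of_cycle_with_ear:
  assumes "colored_graph G" "is_cycle X" "X \<subseteq> G" "inj_on snd G"
    "is_ear P (Vs X) (Es X)" "path_edges P \<subseteq> Es G"
  shows "has_even_rainbow_cycle G"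
proof -
  obtain cs where cs: "distinct cs" "3 \<le> length cs" "Es X = cycle_edges cs" "Vs X = set cs"
    by (rule is_cycle_obtain_list[OF assms(2)])
  show ?thesis
  proof (rule even_rainbow_cycle_of_cycle_list_ear[OF assms(1) cs(1,2) _ _ assms(6)])
    show "cycle_edges cs \<subseteq> Es G" using Es_mono[OF assms(3)] cs(3) by simp
    show "is_ear P (set cs) (cycle_edges cs)" using assms(5) cs(3,4) by simp
    show "inj_on snd (restrict_edges G (cycle_edges cs \<union> path_edges P))"
      by (rule inj_on_subset[OF assms(4) restrict_edges_subset])
  qed
qed

lemma even_rainbow_cycle_of_theta_with_ear:
  assumes G: "colored_graph G" and theta: "theta_of X P\<^sub>1 P\<^sub>2 P\<^sub>3" and "X \<subseteq> G"
    and e: "e\<^sub>1 \<in> P\<^sub>1" "e\<^sub>2 \<in> P\<^sub>2" "inj_on snd (G - {e\<^sub>1})" "inj_on snd (G - {e\<^sub>2})"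
    and ear: "is_ear P (Vs X) (Es X)" "path_edges P \<subseteq> Es G"
  shows "has_even_rainbow_cycle G"
proof -
  obtain s t xs\<^sub>1 xs\<^sub>2 xs\<^sub>3 where xs: "list_theta xs\<^sub>1 xs\<^sub>2 xs\<^sub>3 s t"
    "Es P\<^sub>1 = path_edges xs\<^sub>1" "Es P\<^sub>2 = path_edges xs\<^sub>2" "Es P\<^sub>3 = path_edges xs\<^sub>3"
    "Vs P\<^sub>1 = set xs\<^sub>1" "Vs P\<^sub>2 = set xs\<^sub>2" "Vs P\<^sub>3 = set xs\<^sub>3"
    by (rule theta_of_obtain_lists[OF theta])
  have X: "X = P\<^sub>1 \<union> P\<^sub>2 \<union> P\<^sub>3" using theta unfolding theta_of_def by blast
  then have EV: "Es X = path_edges xs\<^sub>1 \<union> path_edges xs\<^sub>2 \<union> path_edges xs\<^sub>3"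
    "Vs X = set xs\<^sub>1 \<union> set xs\<^sub>2 \<union> set xs\<^sub>3"
    using xs by (simp_all add: Es_Un Vs_Un)
  have "e\<^sub>1 \<in> G" "e\<^sub>2 \<in> G" using e(1,2) X \<open>X \<subseteq> G\<close> by auto
  then have "rainbow_avoiding G (Es G) (fst e\<^sub>1) (fst e\<^sub>2)"
    using inj_on_subset[OF e(3) restrict_edges_Diff_subset[OF G]]
      inj_on_subset[OF e(4) restrict_edges_Diff_subset[OF G]]
    by (intro rainbow_avoidingI)
  moreover have "fst e\<^sub>1 \<in> path_edges xs\<^sub>1" "fst e\<^sub>2 \<in> path_edges xs\<^sub>2"
    using e(1,2) xs(2,3) by (auto simp: Es_def)
  moreover have "path_edges xs\<^sub>1 \<union> path_edges xs\<^sub>2 \<union> path_edges xs\<^sub>3 \<union> path_edges P \<subseteq> Es G"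
    using Es_mono[OF \<open>X \<subseteq> G\<close>] EV(1) ear(2) by blast
  ultimately show ?thesis
    using even_rainbow_cycle_of_list_theta_ear[OF G xs(1) ear(1)[unfolded EV]] by blast
qed

lemma ear_in_cycle:
  assumes "is_cycle C" "Es C - Es X \<noteq> {}" "2 \<le> card (Vs C \<inter> Vs X)"
  obtains P where "is_ear P (Vs X) (Es X)" "path_edges P \<subseteq> Es C"
proof -
  obtain cs where cs: "distinct cs" "3 \<le> length cs" "Es C = cycle_edges cs" "Vs C = set cs"
    by (rule is_cycle_obtain_list[OF assms(1)])
  obtain f where "f \<in> cycle_edges cs" "f \<notin> Es X" using assms(2) cs(3) by blast
  moreover have "\<forall>e\<in>Es X. e \<subseteq> Vs X" by (auto simp: Vs_eq_Union_Es)
  ultimately show ?thesis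
    using ear_in_cycle_list[OF cs(1) _ _ _ , of "Vs X" f "Es X"] assms(3) cs(3,4) that by auto
qed

lemma ear_attachment:
  assumes "is_cycle C" "rainbow C" "colors X \<inter> colors (C - X) = {}" "colored_graph X"
    "path_edges P \<subseteq> Es C" "path_edges P \<inter> Es X = {}"
  shows "colored_graph (restrict_edges C (path_edges P) \<union> X)"
    and "path_edges P \<subseteq> Es (restrict_edges C (path_edges P) \<union> X)"
    and "restrict_edges C (path_edges P) \<union> X \<subseteq> C \<union> X"
    and "Z \<subseteq> X \<Longrightarrow> inj_on snd (X - Z) \<Longrightarrow> inj_on snd (restrict_edges C (path_edges P) \<union> X - Z)"
proof -
  let ?H = "restrict_edges C (path_edges P)"
  have C: "colored_graph C" "finite C" using assms(1) by (simp_all add: is_cycle_def colored_graph_def)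
  then have H: "colored_graph ?H" "Es ?H = path_edges P"
    using assms(5) by (simp_all add: colored_graph_restrict_edges Es_restrict_edges)
  then show "colored_graph (?H \<union> X)" using assms(4,6) by (simp add: colored_graph_Un)
  show "path_edges P \<subseteq> Es (?H \<union> X)" using H(2) by (simp add: Es_Un)
  show "?H \<union> X \<subseteq> C \<union> X" using restrict_edges_subset by blast
  have "?H \<subseteq> C - X" using assms(6) by (auto simp: restrict_edges_def Es_def)
  have "inj_on snd C" using assms(2) C(2) rainbow_iff_inj_on by blast
  then have "inj_on snd ?H" by (rule inj_on_subset[OF _ restrict_edges_subset])
  show "inj_on snd (?H \<union> X - Z)" if "Z \<subseteq> X" "inj_on snd (X - Z)"
  proof -
    have "?H \<union> X - Z = ?H \<union> (X - Z)" using that(1) \<open>?H \<subseteq> C - X\<close> by blast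
    then show ?thesis
      using that(2) \<open>inj_on snd ?H\<close> \<open>?H \<subseteq> C - X\<close> assms(3) by (auto simp: inj_on_Un colors_def)
  qed
qed

theorem lemma2p5:
  fixes C X :: "('v,'c) cgraph"
  assumes "is_cycle C" and "rainbow C"
    and "(is_cycle X \<and> rainbow X) \<or> bad_piece X"
    and "colors X \<inter> colors (C - X) = {}"
    and "Es C - Es X \<noteq> {}"
    and "card (Vs C \<inter> Vs X) \<ge> 2"
  shows "\<exists>D. D \<subseteq> C \<union> X \<and> even_cycle D \<and> rainbow D"
proof -
  obtain P where ear: "is_ear P (Vs X) (Es X)" and "path_edges P \<subseteq> Es C"
    by (rule ear_in_cycle[OF assms(1,5,6)])
  have "colored_graph X"
    using assms(3) colored_graph_theta_of unfolding is_cycle_def bad_piece_def by blast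
  then have X: "colored_graph X" "finite X" by (simp_all add: colored_graph_def)
  note G = ear_attachment[OF assms(1,2,4) X(1) \<open>path_edges P \<subseteq> Es C\<close> is_earD(5)[OF ear]]
  let ?G = "restrict_edges C (path_edges P) \<union> X"
  have "has_even_rainbow_cycle ?G"
    using assms(3)
  proof
    assume "is_cycle X \<and> rainbow X"
    then show ?thesis
      using even_rainbow_cycle_of_cycle_with_ear[OF G(1) _ _ _ ear G(2)] G(4)[of "{}"]
        rainbow_iff_inj_on[OF X(2)] by auto
  next
    assume "bad_piece X"
    then obtain P\<^sub>1 P\<^sub>2 P\<^sub>3 e\<^sub>1 e\<^sub>2 where th: "theta_of X P\<^sub>1 P\<^sub>2 P\<^sub>3" "e\<^sub>1 \<in> P\<^sub>1" "e\<^sub>2 \<in> P\<^sub>2"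
      "inj_on snd (X - {e\<^sub>1})" "inj_on snd (X - {e\<^sub>2})"
      by (rule bad_piece_twin_edges)
    moreover have "{e\<^sub>1} \<subseteq> X" "{e\<^sub>2} \<subseteq> X" using th(1-3) unfolding theta_of_def by blast+
    ultimately show ?thesis
      using even_rainbow_cycle_of_theta_with_ear[OF G(1) th(1) _ th(2,3) _ _ ear G(2)] G(4) by blast
  qed
  then show ?thesis using G(3) unfolding has_even_rainbow_cycle_def by blast
qed

end
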